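(* For any integer $n>1$ and any integer $1\le m\le n(n-1)$, the numbers $\lceil \frac{m}{n-1}\rceil$ and $n-((m-1)\bmod n)$ are two distinct integers in $\{1,\dots,n\}$.
   Context: $a\bmod b$ denotes the remainder of $a$ upon division by $b$, lying in $\{0,\dots,b-1\}$. *)

theory Defs
  imports Complex_Main
begin

end

theory Submission
  imports Defs
begin

text \<open>Write \<open>m - 1 = q (n - 1) + r\<close> with \<open>0 \<le> r < n - 1\<close>, so that the ceiling is \<open>q + 1\<close>.
  Since also \<open>m - 1 = q n + (r - q)\<close>, the equation \<open>(m - 1) mod n + q = n - 1\<close> would force
  \<open>n\<close> to divide \<open>r + 1\<close>, which lies strictly between \<open>0\<close> and \<open>n\<close>.\<close>

lemma ceiling_divide_of_int_eq:
  fixes k d :: int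
  assumes "d > 0"
  shows "\<lceil>(of_int k :: 'a::floor_ceiling) / of_int d\<rceil> = (k - 1) div d + 1"
proof (rule ceiling_unique)
  define q where "q = (k - 1) div d"
  have "q * d < k" "k \<le> q * d + d"
    using div_mult_mod_eq[of "k - 1" d] pos_mod_bound[of d "k - 1"] pos_mod_sign[of d "k - 1"]
      assms unfolding q_def by linarith+
  then have "(of_int (q * d) :: 'a) < of_int k" "(of_int k :: 'a) \<le> of_int (q * d + d)"
    by (simp_all only: of_int_less_iff of_int_le_iff)
  then show "(of_int (q + 1) :: 'a) - 1 < of_int k / of_int d"
    and "(of_int k :: 'a) / of_int d \<le> of_int (q + 1)"
    using assms by (simp_all add: pos_less_divide_eq pos_divide_le_eq algebra_simps)
qed

lemma div_pred_plus_mod_ne: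
  fixes n k :: int
  assumes "n > 1"
  shows "k div (n - 1) + k mod n \<noteq> n - 1"
proof
  define q where "q = k div (n - 1)"
  define r where "r = k mod (n - 1)"
  assume "q + k mod n = n - 1"
  moreover have "k div n * n + k mod n = k" "q * (n - 1) + r = k"
    unfolding q_def r_def by (fact div_mult_mod_eq)+
  moreover have "n * (k div n + 1 - q) = k div n * n + n - q * (n - 1) - q"
    by (simp add: algebra_simps)
  ultimately have "r + 1 = n * (k div n + 1 - q)"
    by linarith
  then have "n dvd r + 1" by simp
  moreover have "0 < r + 1" "r + 1 < n"
    using assms pos_mod_sign[of "n - 1" k] pos_mod_bound[of "n - 1" k]
    unfolding r_def by linarith+
  ultimately show False using zdvd_imp_le by fastforce
qed

theorem lemma8:
  fixes n m :: int
  assumes "n > 1" and "1 \<le> m" and "m \<le> n * (n - 1)"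
  shows "\<lceil>real_of_int m / real_of_int (n - 1)\<rceil> \<in> {1..n}
       \<and> n - ((m - 1) mod n) \<in> {1..n}
       \<and> \<lceil>real_of_int m / real_of_int (n - 1)\<rceil> \<noteq> n - ((m - 1) mod n)"
proof -
  define q where "q = (m - 1) div (n - 1)"
  have ceiling_eq: "\<lceil>real_of_int m / real_of_int (n - 1)\<rceil> = q + 1"
    unfolding q_def using assms(1) by (intro ceiling_divide_of_int_eq) simp
  have "q * (n - 1) < n * (n - 1)"
    using assms div_mult_mod_eq[of "m - 1" "n - 1"] pos_mod_sign[of "n - 1" "m - 1"]
    unfolding q_def by linarith
  then have "q < n"
    using assms(1) by (simp add: mult_less_cancel_right)
  moreover have "0 \<le> q"
    unfolding q_def using assms by (simp add: pos_imp_zdiv_nonneg_iff)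
  moreover have "0 \<le> (m - 1) mod n" "(m - 1) mod n < n"
    using assms(1) by simp_all
  moreover have "q + (m - 1) mod n \<noteq> n - 1"
    unfolding q_def using div_pred_plus_mod_ne assms(1) .
  ultimately show ?thesis
    unfolding ceiling_eq atLeastAtMost_iff by (intro conjI; linarith)
qed

end
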